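(* Fix $c>0$, $\lambda>1$, one of the six models, $N$, and $1\le N_1,N_2\le N-1$ with $N_1+N_2=N$. For every $r=1,\dots,\lfloor cN\rfloor$, $$\mathbb{E}\big[\log Z(\mathbb{G}(N,\lfloor cN\rfloor,r))\big]\ge\mathbb{E}\big[\log Z(\mathbb{G}(N,\lfloor cN\rfloor,r-1))\big].$$
   Context: Let $K\ge2$, $\chi=\{0,\dots,q-1\}$, $[N_1]=\{1,\dots,N_1\}$, $[N_2]=\{N_1+1,\dots,N\}$. For $0\le r\le\lfloor cN\rfloor$, $\mathbb{G}(N,\lfloor cN\rfloor,r)$ is the random hypergraph on $[N]$ with $\lfloor cN\rfloor$ independently generated directed $K$-hyperedges: the first $r$ uniform on $[N]^K$, each remaining one uniform on $[N_1]^K$ with probability $N_1/N$ and uniform on $[N_2]^K$ with probability $N_2/N$; potentials are assigned as in the model. $H(x)=\sum_iH_i(x_i)+\sum_{e\in E}H_e(x_e)$ and $Z(G)=\sum_{x\in\chi^N}\lambda^{H(x)}$, $\lambda^{-\infty}=0$. Models: Independent set ($K=2,q=2$, $H_i(1)=1,H_i(0)=0$, $H_e(1,1)=-\infty$, else $0$); MAX-CUT ($K=2,q=2$, $H_i\equiv0$, $H_e(x,y)=\mathbf 1[x\ne y]$); anti-ferromagnetic Ising ($K=2,q=2$, fixed $\beta>0,B\in\mathbb{R}$, $H_i(0)=-B,H_i(1)=B$, $H_e(x,y)=-\beta$ if $x=y$, $\beta$ otherwise); $q$-Coloring ($K=2$, $H_i\equiv0$, $H_e(x,y)=\mathbf 1[x\ne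 y]$); K-SAT ($q=2$, $H_i\equiv0$, independent uniform $a_e\in\{0,1\}^K$, $H_e(a_e)=0$, $1$ otherwise); NAE-K-SAT ($H_e(a_e)=H_e(\mathbf1-a_e)=0$, $1$ otherwise). *)

theory Defs
  imports "HOL-Probability.Probability"
begin

text \<open>A directed K-hyperedge is a list of K vertices in [N] together with its
  (possibly random) edge potential H_e, a function of the list of spins x_e.
  A hypergraph is a list of such hyperedges (multiset of independently generated edges).\<close>

type_synonym hedge = "nat list \<times> (nat list \<Rightarrow> ereal)"

definition lam_pow :: "real \<Rightarrow> ereal \<Rightarrow> real" where
  "lam_pow lam h = (if h = -\<infinity> then 0 else lam powr real_of_ereal h)"

datatype model =
    IndSet
  | MaxCut
  | Ising real real       \<comment> \<open>Ising beta B\<close>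
  | Coloring nat
  | KSAT nat
  | NAEKSAT nat

fun mK :: "model \<Rightarrow> nat" where
  "mK (KSAT K) = K"
| "mK (NAEKSAT K) = K"
| "mK _ = 2"

fun mq :: "model \<Rightarrow> nat" where
  "mq (Coloring q) = q"
| "mq _ = 2"

fun valid_model :: "model \<Rightarrow> bool" where
  "valid_model (Ising \<beta> B) = (\<beta> > 0)"
| "valid_model (KSAT K) = (K \<ge> 2)"
| "valid_model (NAEKSAT K) = (K \<ge> 2)"
| "valid_model _ = True"

fun node_pot :: "model \<Rightarrow> nat \<Rightarrow> ereal" where
  "node_pot IndSet s = (if s = 1 then 1 else 0)"
| "node_pot (Ising \<beta> B) s = (if s = 0 then ereal (-B) else ereal B)"
| "node_pot _ s = 0"

definition bin_lists :: "nat \<Rightarrow> nat list set" where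
  "bin_lists K = {a. length a = K \<and> set a \<subseteq> {0,1}}"

fun edge_pot :: "model \<Rightarrow> (nat list \<Rightarrow> ereal) pmf" where
  "edge_pot IndSet = return_pmf (\<lambda>y. if y = [1,1] then -\<infinity> else 0)"
| "edge_pot MaxCut = return_pmf (\<lambda>y. if y ! 0 \<noteq> y ! 1 then 1 else 0)"
| "edge_pot (Ising \<beta> B) = return_pmf (\<lambda>y. if y ! 0 = y ! 1 then ereal (-\<beta>) else ereal \<beta>)"
| "edge_pot (Coloring q) = return_pmf (\<lambda>y. if y ! 0 \<noteq> y ! 1 then 1 else 0)"
| "edge_pot (KSAT K) = map_pmf (\<lambda>a y. if y = a then 0 else 1) (pmf_of_set (bin_lists K))"
| "edge_pot (NAEKSAT K) =
     map_pmf (\<lambda>a y. if y = a \<or> y = map (\<lambda>b. 1 - b) a then 0 else 1) (pmf_of_set (bin_lists K))"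

definition hamiltonian :: "model \<Rightarrow> nat \<Rightarrow> hedge list \<Rightarrow> (nat \<Rightarrow> nat) \<Rightarrow> ereal" where
  "hamiltonian M N G x =
     (\<Sum>i\<in>{1..N}. node_pot M (x i)) + sum_list (map (\<lambda>e. snd e (map x (fst e))) G)"

definition partition_fn :: "model \<Rightarrow> real \<Rightarrow> nat \<Rightarrow> hedge list \<Rightarrow> real" where
  "partition_fn M lam N G =
     (\<Sum>x\<in>PiE {1..N} (\<lambda>_. {0..<mq M}). lam_pow lam (hamiltonian M N G x))"

fun indep_list :: "'a pmf list \<Rightarrow> 'a list pmf" where
  "indep_list [] = return_pmf []"
| "indep_list (p # ps) = bind_pmf p (\<lambda>x. map_pmf (\<lambda>xs. x # xs) (indep_list ps))"

definition unif_tuples :: "nat set \<Rightarrow> nat \<Rightarrow> nat list pmf" where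
  "unif_tuples V K = pmf_of_set {xs. length xs = K \<and> set xs \<subseteq> V}"

definition full_edge :: "model \<Rightarrow> nat \<Rightarrow> hedge pmf" where
  "full_edge M N = pair_pmf (unif_tuples {1..N} (mK M)) (edge_pot M)"

text \<open>Edge uniform on [N1]^K w.p. N1/N and uniform on [N2]^K = \{N1+1..N\}^K w.p. N2/N.\<close>
definition split_edge :: "model \<Rightarrow> nat \<Rightarrow> nat \<Rightarrow> hedge pmf" where
  "split_edge M N N1 =
     pair_pmf
       (bind_pmf (bernoulli_pmf (real N1 / real N))
          (\<lambda>b. if b then unif_tuples {1..N1} (mK M) else unif_tuples {N1+1..N} (mK M)))
       (edge_pot M)"

definition rand_graph :: "model \<Rightarrow> nat \<Rightarrow> nat \<Rightarrow> nat \<Rightarrow> nat \<Rightarrow> hedge list pmf" where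
  "rand_graph M N N1 m r =
     indep_list (replicate r (full_edge M N) @ replicate (m - r) (split_edge M N N1))"

end

theory Submission
  imports Defs
begin

text \<open>The two random hypergraphs differ in a single independent edge, which is uniform on
  \<open>[N]\<^sup>K\<close> in one case and a split edge in the other; it suffices to compare
  \<open>\<bbbE> ln Z(e \<cdot> G)\<close> over the two edge laws for every fixed remaining graph \<open>G\<close>.
  Every edge potential takes only a low value \<open>h\<^sub>0\<close> and a high value \<open>h\<^sub>1\<close>, so with
  \<open>w(x) = \<lambda>\<^bsup>H_G(x)\<^esup>\<close> we get \<open>Z(e \<cdot> G) = \<lambda>\<^bsup>h\<^sub>1\<^esup> Z(G) - (\<lambda>\<^bsup>h\<^sub>1\<^esup> - \<lambda>\<^bsup>h\<^sub>0\<^esup>) \<sigma>(e)\<close>, where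
  \<open>\<sigma>(e) = \<Sum>\<^sub>x w(x) [e is low at x]\<close>.
  Expanding \<open>ln (1 - u)\<close> as a power series, the comparison follows once every moment of \<open>\<sigma>\<close>
  is larger under the split edge. Expanding \<open>\<sigma>\<^sup>n\<close>, this reduces to the probability that the edge
  is low at \<open>n\<close> given configurations simultaneously; for each model this probability is a
  nonnegative mixture of \<open>K\<close>-th powers of vertex averages, and the average over \<open>[N]\<close> is the
  \<open>N\<^sub>1/N, N\<^sub>2/N\<close> convex combination of the averages over the two parts, so convexity
  of \<open>t\<^sup>K\<close> concludes.\<close>

section \<open>Expectations under finitely supported distributions\<close>

lemma pmf_expectation_eq_sum:
  fixes f :: "'a \<Rightarrow> real"
  assumes "finite A" "set_pmf p \<subseteq> A"
  shows "measure_pmf.expectation p f = (\<Sum>a\<in>A. pmf p a * f a)"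
  by (subst integral_measure_pmf_real[of A]) (use assms in \<open>auto simp: mult.commute\<close>)

lemma pmf_expectation_cong:
  fixes f g :: "'a \<Rightarrow> real"
  assumes "finite (set_pmf p)" "\<And>a. a \<in> set_pmf p \<Longrightarrow> f a = g a"
  shows "measure_pmf.expectation p f = measure_pmf.expectation p g"
  using assms by (simp add: pmf_expectation_eq_sum[OF assms(1) order_refl])

lemma pmf_expectation_mono:
  fixes f g :: "'a \<Rightarrow> real"
  assumes "finite (set_pmf p)" "\<And>a. a \<in> set_pmf p \<Longrightarrow> f a \<le> g a"
  shows "measure_pmf.expectation p f \<le> measure_pmf.expectation p g"
  using assms by (simp add: pmf_expectation_eq_sum[OF assms(1) order_refl] sum_mono mult_left_mono)

lemma pmf_expectation_sum:
  fixes f :: "'b \<Rightarrow> 'a \<Rightarrow> real"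
  assumes "finite (set_pmf p)" "finite I"
  shows "measure_pmf.expectation p (\<lambda>e. \<Sum>k\<in>I. c k * f k e)
       = (\<Sum>k\<in>I. c k * measure_pmf.expectation p (f k))"
  using assms by (simp add: pmf_expectation_eq_sum[OF assms(1) order_refl] sum_distrib_left
      mult.left_commute sum.swap[of _ "set_pmf p"])

lemma pmf_expectation_swap:
  fixes f :: "'a \<Rightarrow> 'b \<Rightarrow> real"
  assumes "finite (set_pmf p)" "finite (set_pmf q)"
  shows "measure_pmf.expectation p (\<lambda>a. measure_pmf.expectation q (\<lambda>b. f a b))
       = measure_pmf.expectation q (\<lambda>b. measure_pmf.expectation p (\<lambda>a. f a b))"
  using assms by (simp add: pmf_expectation_eq_sum[OF assms(1) order_refl]
      pmf_expectation_eq_sum[OF assms(2) order_refl] sum_distrib_left mult.assoc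
      mult.left_commute sum.swap[of _ "set_pmf p"])

lemma pmf_expectation_bind:
  fixes f :: "'b \<Rightarrow> real"
  assumes "finite (set_pmf q)" "\<And>z. z \<in> set_pmf q \<Longrightarrow> finite (set_pmf (K z))"
  shows "measure_pmf.expectation (bind_pmf q K) f
       = measure_pmf.expectation q (\<lambda>z. measure_pmf.expectation (K z) f)"
proof -
  let ?Y = "\<Union>z\<in>set_pmf q. set_pmf (K z)"
  have fY: "finite ?Y" using assms by auto
  have "measure_pmf.expectation (bind_pmf q K) f = (\<Sum>y\<in>?Y. pmf (bind_pmf q K) y * f y)"
    by (rule pmf_expectation_eq_sum[OF fY]) auto
  also have "\<dots> = (\<Sum>y\<in>?Y. (\<Sum>z\<in>set_pmf q. pmf q z * pmf (K z) y) * f y)"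
    by (simp add: pmf_bind pmf_expectation_eq_sum[OF assms(1) order_refl])
  also have "\<dots> = (\<Sum>z\<in>set_pmf q. pmf q z * (\<Sum>y\<in>?Y. pmf (K z) y * f y))"
    by (simp add: sum_distrib_left sum_distrib_right mult.assoc sum.swap[of _ ?Y])
  also have "\<dots> = (\<Sum>z\<in>set_pmf q. pmf q z * measure_pmf.expectation (K z) f)"
    by (intro sum.cong refl arg_cong2[where f="(*)"], subst pmf_expectation_eq_sum[OF fY]) auto
  also have "\<dots> = measure_pmf.expectation q (\<lambda>z. measure_pmf.expectation (K z) f)"
    by (simp add: pmf_expectation_eq_sum[OF assms(1) order_refl])
  finally show ?thesis .
qed

lemma pmf_expectation_pair:
  fixes f :: "'a \<times> 'b \<Rightarrow> real"
  assumes "finite (set_pmf A)" "finite (set_pmf B)"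
  shows "measure_pmf.expectation (pair_pmf A B) f
       = measure_pmf.expectation A (\<lambda>a. measure_pmf.expectation B (\<lambda>b. f (a, b)))"
  unfolding pair_pmf_def using assms by (simp add: pmf_expectation_bind)

lemma finite_set_indep_list:
  "(\<And>p. p \<in> set ps \<Longrightarrow> finite (set_pmf p)) \<Longrightarrow> finite (set_pmf (indep_list ps))"
  by (induction ps) auto

lemma set_indep_list_subset:
  "G \<in> set_pmf (indep_list ps) \<Longrightarrow> set G \<subseteq> (\<Union>p\<in>set ps. set_pmf p)"
  by (induction ps arbitrary: G) fastforce+

lemma expectation_indep_list_Cons:
  fixes f :: "'a list \<Rightarrow> real"
  assumes "\<And>p. p \<in> set (q # ps) \<Longrightarrow> finite (set_pmf p)"
  shows "measure_pmf.expectation (indep_list (q # ps)) f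
       = measure_pmf.expectation q (\<lambda>z. measure_pmf.expectation (indep_list ps) (\<lambda>G. f (z # G)))"
  using assms by (simp add: pmf_expectation_bind finite_set_indep_list)

lemma expectation_indep_list_insert:
  fixes \<Psi> :: "'a list \<Rightarrow> real"
  assumes fin: "\<And>p'. p' \<in> set (as @ p # bs) \<Longrightarrow> finite (set_pmf p')"
    and perm: "\<And>xs e ys. \<Psi> (xs @ e # ys) = \<Psi> (e # xs @ ys)"
  shows "measure_pmf.expectation (indep_list (as @ p # bs)) \<Psi>
       = measure_pmf.expectation (indep_list (as @ bs))
           (\<lambda>G. measure_pmf.expectation p (\<lambda>e. \<Psi> (e # G)))"
  using fin perm
proof (induction as arbitrary: \<Psi>)
  case Nil
  have "measure_pmf.expectation (indep_list (p # bs)) \<Psi>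
      = measure_pmf.expectation p (\<lambda>z. measure_pmf.expectation (indep_list bs) (\<lambda>G. \<Psi> (z # G)))"
    by (rule expectation_indep_list_Cons) (use Nil.prems in auto)
  also have "\<dots> = measure_pmf.expectation (indep_list bs)
                    (\<lambda>G. measure_pmf.expectation p (\<lambda>z. \<Psi> (z # G)))"
    by (rule pmf_expectation_swap) (use Nil.prems in \<open>auto simp: finite_set_indep_list\<close>)
  finally show ?case by simp
next
  case (Cons q as)
  have swap: "\<Psi> (z # e # G) = \<Psi> (e # z # G)" for z e G
    using Cons.prems(2)[of "[z]"] by simp
  have perm_tail: "\<Psi> (z # xs @ e # ys) = \<Psi> (z # e # xs @ ys)" for z xs e ys
    using Cons.prems(2)[of "z # xs" e ys] Cons.prems(2)[of "[z]" e "xs @ ys"] by simp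
  have "measure_pmf.expectation (indep_list ((q # as) @ p # bs)) \<Psi>
      = measure_pmf.expectation q
          (\<lambda>z. measure_pmf.expectation (indep_list (as @ p # bs)) (\<lambda>G. \<Psi> (z # G)))"
    unfolding append_Cons by (rule expectation_indep_list_Cons) (use Cons.prems(1) in auto)
  also have "\<dots> = measure_pmf.expectation q (\<lambda>z. measure_pmf.expectation (indep_list (as @ bs))
                     (\<lambda>G. measure_pmf.expectation p (\<lambda>e. \<Psi> (z # e # G))))"
    using Cons.IH[of "\<lambda>G. \<Psi> (_ # G)"] Cons.prems(1) perm_tail by simp
  also have "\<dots> = measure_pmf.expectation (indep_list ((q # as) @ bs))
                     (\<lambda>G. measure_pmf.expectation p (\<lambda>e. \<Psi> (e # G)))"
    unfolding append_Cons
    by (subst expectation_indep_list_Cons) (use Cons.prems(1) in \<open>auto simp: swap\<close>)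
  finally show ?case .
qed

lemma expectation_indep_list_replace_le:
  fixes \<Psi> :: "'a list \<Rightarrow> real"
  assumes fin: "\<And>p. p \<in> set (as @ bs) \<Longrightarrow> finite (set_pmf p)"
      "finite (set_pmf F)" "finite (set_pmf S)"
    and perm: "\<And>xs e ys. \<Psi> (xs @ e # ys) = \<Psi> (e # xs @ ys)"
    and le: "\<And>G. G \<in> set_pmf (indep_list (as @ bs)) \<Longrightarrow>
      measure_pmf.expectation S (\<lambda>e. \<Psi> (e # G)) \<le> measure_pmf.expectation F (\<lambda>e. \<Psi> (e # G))"
  shows "measure_pmf.expectation (indep_list (as @ S # bs)) \<Psi>
       \<le> measure_pmf.expectation (indep_list (as @ F # bs)) \<Psi>"
proof -
  have "finite (set_pmf p)" if "p \<in> set (as @ q # bs)" "q = F \<or> q = S" for p q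
    using that fin by auto
  then have "measure_pmf.expectation (indep_list (as @ q # bs)) \<Psi>
      = measure_pmf.expectation (indep_list (as @ bs))
          (\<lambda>G. measure_pmf.expectation q (\<lambda>e. \<Psi> (e # G)))" if "q = F \<or> q = S" for q
    using that by (intro expectation_indep_list_insert perm) blast
  moreover have "measure_pmf.expectation (indep_list (as @ bs))
      (\<lambda>G. measure_pmf.expectation S (\<lambda>e. \<Psi> (e # G)))
    \<le> measure_pmf.expectation (indep_list (as @ bs))
      (\<lambda>G. measure_pmf.expectation F (\<lambda>e. \<Psi> (e # G)))"
    by (rule pmf_expectation_mono[OF finite_set_indep_list[OF fin(1)] le])
  ultimately show ?thesis by simp
qed

section \<open>Uniform tuples and convexity\<close>

definition tuples :: "'a set \<Rightarrow> nat \<Rightarrow> 'a list set" where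
  "tuples V K = {xs. length xs = K \<and> set xs \<subseteq> V}"

lemma tuples_Suc: "tuples V (Suc K) = (\<lambda>(x, xs). x # xs) ` (V \<times> tuples V K)"
  unfolding tuples_def by (auto simp: length_Suc_conv image_iff)

lemma finite_tuples: "finite V \<Longrightarrow> finite (tuples V K)"
  unfolding tuples_def using finite_lists_length_eq[of V K] by (simp add: conj_commute)

lemma card_tuples: "finite V \<Longrightarrow> card (tuples V K) = card V ^ K"
  unfolding tuples_def using card_lists_length_eq[of V K] by (simp add: conj_commute)

lemma tuples_nonempty: "V \<noteq> {} \<Longrightarrow> tuples V K \<noteq> {}"
  unfolding tuples_def
  by (auto intro!: exI[of _ "replicate K (SOME v. v \<in> V)"] some_in_eq[THEN iffD2])

lemma tuples_mono: "V \<subseteq> W \<Longrightarrow> tuples V K \<subseteq> tuples W K"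
  unfolding tuples_def by auto

lemma tuples_2_obtain:
  assumes "i \<in> tuples V 2"
  obtains a b where "i = [a, b]" "a \<in> V" "b \<in> V"
  using assms unfolding tuples_def by (auto simp: numeral_2_eq_2 length_Suc_conv)

lemma sum_tuples_prod_list:
  fixes g :: "'a \<Rightarrow> real"
  assumes "finite V"
  shows "(\<Sum>i\<in>tuples V K. prod_list (map g i)) = (\<Sum>v\<in>V. g v) ^ K"
proof (induction K)
  case 0
  have "tuples V 0 = {[]}" unfolding tuples_def by auto
  then show ?case by simp
next
  case (Suc K)
  have inj: "inj_on (\<lambda>(x, xs). x # xs) (V \<times> tuples V K)" by (auto simp: inj_on_def)
  have "(\<Sum>i\<in>tuples V (Suc K). prod_list (map g i))
      = (\<Sum>(x, xs)\<in>V \<times> tuples V K. g x * prod_list (map g xs))"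
    unfolding tuples_Suc by (subst sum.reindex[OF inj]) (auto intro!: sum.cong)
  also have "\<dots> = (\<Sum>x\<in>V. g x) * (\<Sum>xs\<in>tuples V K. prod_list (map g xs))"
    by (simp add: sum.cartesian_product[symmetric] sum_product)
  finally show ?case using Suc by simp
qed

lemma set_pmf_unif_tuples: "finite V \<Longrightarrow> V \<noteq> {} \<Longrightarrow> set_pmf (unif_tuples V K) = tuples V K"
  by (simp add: unif_tuples_def tuples_def[symmetric] finite_tuples tuples_nonempty)

lemma finite_set_unif_tuples: "finite V \<Longrightarrow> V \<noteq> {} \<Longrightarrow> finite (set_pmf (unif_tuples V K))"
  by (simp add: set_pmf_unif_tuples finite_tuples)

lemma expectation_unif_tuples_mixture:
  fixes Q :: "nat list \<Rightarrow> real"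
  assumes "finite V" "V \<noteq> {}" "finite T"
    and mix: "\<And>i. i \<in> tuples V K \<Longrightarrow> Q i = (\<Sum>t\<in>T. c t * prod_list (map (g t) i))"
  shows "measure_pmf.expectation (unif_tuples V K) Q
       = (\<Sum>t\<in>T. c t * ((\<Sum>v\<in>V. g t v) / card V) ^ K)"
proof -
  have "measure_pmf.expectation (unif_tuples V K) Q = (\<Sum>i\<in>tuples V K. Q i) / card (tuples V K)"
    by (simp add: unif_tuples_def tuples_def[symmetric] integral_pmf_of_set finite_tuples
        assms tuples_nonempty)
  also have "(\<Sum>i\<in>tuples V K. Q i) = (\<Sum>i\<in>tuples V K. \<Sum>t\<in>T. c t * prod_list (map (g t) i))"
    by (rule sum.cong) (auto simp: mix)
  also have "\<dots> = (\<Sum>t\<in>T. c t * (\<Sum>v\<in>V. g t v) ^ K)"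
    by (subst sum.swap) (simp add: sum_distrib_left[symmetric] sum_tuples_prod_list assms)
  finally show ?thesis
    by (simp add: card_tuples assms power_divide sum_divide_distrib[symmetric] sum_distrib_left
        del: sum_divide_distrib)
qed

lemma power_convex_combination_le:
  fixes a b t :: real
  assumes "0 \<le> a" "0 \<le> b" "0 \<le> t" "t \<le> 1"
  shows "(t * a + (1 - t) * b) ^ K \<le> t * a ^ K + (1 - t) * b ^ K"
proof -
  have "convex_on {0..} (\<lambda>x::real. x ^ K)"
    using convex_power_even[of K] convex_power_odd[of K] convex_on_subset by (cases "even K") auto
  from convex_onD[OF this, of "1 - t" a b] assms show ?thesis by (simp add: algebra_simps)
qed

lemma average_split:
  fixes g :: "nat \<Rightarrow> real"
  assumes "1 \<le> N1" "1 \<le> N2" "N1 + N2 = N"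
  shows "(\<Sum>v\<in>{1..N}. g v) / card {1..N}
       = real N1 / real N * ((\<Sum>v\<in>{1..N1}. g v) / card {1..N1})
         + (1 - real N1 / real N) * ((\<Sum>v\<in>{N1+1..N}. g v) / card {N1+1..N})"
proof -
  have "(\<Sum>v\<in>{1..N}. g v) = (\<Sum>v\<in>{1..N1}. g v) + (\<Sum>v\<in>{N1+1..N}. g v)"
    using assms sum.ub_add_nat[of 1 N1 g N2] by simp
  moreover have "1 - real N1 / real N = real N2 / real N" "card {N1+1..N} = N2"
    using assms by (auto simp: field_simps)
  moreover have "real N1 / real N * (s / real N1) = s / real N"
    and "real N2 / real N * (s / real N2) = s / real N" for s
    using assms by simp_all
  ultimately show ?thesis
    by (simp add: add_divide_distrib)
qed

lemma expectation_unif_tuples_le_split: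
  fixes Q :: "nat list \<Rightarrow> real"
  assumes N: "1 \<le> N1" "1 \<le> N2" "N1 + N2 = N" and "finite T"
    and c: "\<And>t. 0 \<le> c t" and g: "\<And>t v. 0 \<le> g t v"
    and mix: "\<And>i. i \<in> tuples {1..N} K \<Longrightarrow> Q i = (\<Sum>t\<in>T. c t * prod_list (map (g t) i))"
  shows "measure_pmf.expectation (unif_tuples {1..N} K) Q
     \<le> real N1 / real N * measure_pmf.expectation (unif_tuples {1..N1} K) Q
       + (1 - real N1 / real N) * measure_pmf.expectation (unif_tuples {N1+1..N} K) Q"
proof -
  define \<alpha> where "\<alpha> = real N1 / real N"
  define avg where "avg V t = (\<Sum>v\<in>V. g t v) / card V" for V t
  have \<alpha>: "0 \<le> \<alpha>" "\<alpha> \<le> 1" using N by (auto simp: \<alpha>_def)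
  have E: "measure_pmf.expectation (unif_tuples V K) Q = (\<Sum>t\<in>T. c t * avg V t ^ K)"
    if "V \<subseteq> {1..N}" "V \<noteq> {}" for V
    unfolding avg_def
    by (rule expectation_unif_tuples_mixture)
       (use that \<open>finite T\<close> mix tuples_mono[OF that(1)] finite_subset[OF that(1)] in auto)
  have "(\<Sum>t\<in>T. c t * avg {1..N} t ^ K)
     \<le> (\<Sum>t\<in>T. c t * (\<alpha> * avg {1..N1} t ^ K + (1 - \<alpha>) * avg {N1+1..N} t ^ K))"
    unfolding avg_def average_split[OF N] \<alpha>_def[symmetric]
    by (intro sum_mono mult_left_mono power_convex_combination_le c \<alpha>
        divide_nonneg_nonneg sum_nonneg g) auto
  also have "\<dots> = \<alpha> * (\<Sum>t\<in>T. c t * avg {1..N1} t ^ K)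
      + (1 - \<alpha>) * (\<Sum>t\<in>T. c t * avg {N1+1..N} t ^ K)"
    by (simp add: sum_distrib_left sum.distrib distrib_left mult.left_commute)
  finally show ?thesis
    using N by (simp add: E \<alpha>_def)
qed

fun pot_low :: "model \<Rightarrow> ereal" where
  "pot_low IndSet = -\<infinity>"
| "pot_low (Ising \<beta> B) = ereal (-\<beta>)"
| "pot_low _ = 0"

fun pot_high :: "model \<Rightarrow> ereal" where
  "pot_high IndSet = 0"
| "pot_high (Ising \<beta> B) = ereal \<beta>"
| "pot_high _ = 1"

lemma bin_lists_eq_tuples: "bin_lists K = tuples {0, 1} K"
  unfolding bin_lists_def tuples_def by simp

lemma finite_bin_lists: "finite (bin_lists K)"
  unfolding bin_lists_eq_tuples by (rule finite_tuples) simp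

lemma bin_lists_nonempty: "bin_lists K \<noteq> {}"
  unfolding bin_lists_eq_tuples by (rule tuples_nonempty) simp

lemma card_bin_lists: "card (bin_lists K) = 2 ^ K"
  unfolding bin_lists_eq_tuples by (simp add: card_tuples numeral_2_eq_2)

lemma finite_set_edge_pot: "finite (set_pmf (edge_pot M))"
  by (cases M) (auto simp: finite_bin_lists bin_lists_nonempty)

lemma edge_pot_values: "\<phi> \<in> set_pmf (edge_pot M) \<Longrightarrow> \<phi> y = pot_low M \<or> \<phi> y = pot_high M"
  by (cases M) (auto simp: finite_bin_lists bin_lists_nonempty split: if_splits)

lemma edge_pot_not_PInfty: "\<phi> \<in> set_pmf (edge_pot M) \<Longrightarrow> \<phi> y \<noteq> \<infinity>"
  using edge_pot_values[of \<phi> M y] by (cases M) auto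

lemma lam_pow_pot_low_less_high:
  assumes "valid_model M" "lam > 1"
  shows "lam_pow lam (pot_low M) < lam_pow lam (pot_high M)"
  using assms by (cases M) (auto simp: lam_pow_def)

lemma pot_low_neq_high: "valid_model M \<Longrightarrow> pot_low M \<noteq> pot_high M"
  by (cases M) auto

definition good_edges :: "model \<Rightarrow> nat \<Rightarrow> hedge set" where
  "good_edges M N = tuples {1..N} (mK M) \<times> set_pmf (edge_pot M)"

lemma finite_good_edges: "finite (good_edges M N)"
  by (simp add: good_edges_def finite_tuples finite_set_edge_pot)

lemma set_full_edge: "1 \<le> N \<Longrightarrow> set_pmf (full_edge M N) \<subseteq> good_edges M N"
  by (auto simp: full_edge_def good_edges_def set_pmf_unif_tuples)

lemma set_split_edge:
  assumes "1 \<le> N1" "1 \<le> N2" "N1 + N2 = N"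
  shows "set_pmf (split_edge M N N1) \<subseteq> good_edges M N"
proof -
  have "tuples {1..N1} K \<subseteq> tuples {1..N} K" "tuples {N1+1..N} K \<subseteq> tuples {1..N} K" for K
    using assms by (intro tuples_mono; auto)+
  then show ?thesis
    using assms by (auto simp: split_edge_def good_edges_def set_pmf_unif_tuples split: if_splits)
      blast+
qed

lemma finite_set_full_edge: "1 \<le> N \<Longrightarrow> finite (set_pmf (full_edge M N))"
  by (rule finite_subset[OF set_full_edge finite_good_edges])

lemma finite_set_split_edge:
  "1 \<le> N1 \<Longrightarrow> 1 \<le> N2 \<Longrightarrow> N1 + N2 = N \<Longrightarrow> finite (set_pmf (split_edge M N N1))"
  by (rule finite_subset[OF set_split_edge finite_good_edges])

section \<open>Comparing the full edge with the split edge\<close>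

lemma expectation_full_edge_le_split_edge:
  fixes f :: "hedge \<Rightarrow> real"
  assumes N: "1 \<le> N1" "1 \<le> N2" "N1 + N2 = N" and "finite T"
    and c: "\<And>t. 0 \<le> c t" and g: "\<And>t v. 0 \<le> g t v"
    and mix: "\<And>i. i \<in> tuples {1..N} (mK M) \<Longrightarrow>
      measure_pmf.expectation (edge_pot M) (\<lambda>\<phi>. f (i, \<phi>)) = (\<Sum>t\<in>T. c t * prod_list (map (g t) i))"
  shows "measure_pmf.expectation (full_edge M N) f \<le> measure_pmf.expectation (split_edge M N N1) f"
proof -
  define Q where "Q i = measure_pmf.expectation (edge_pot M) (\<lambda>\<phi>. f (i, \<phi>))" for i
  define \<alpha> where "\<alpha> = real N1 / real N"
  define U where "U b = (if b then unif_tuples {1..N1} (mK M) else unif_tuples {N1+1..N} (mK M))"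
    for b
  have finU: "finite (set_pmf (U b))" for b
    using N by (auto simp: U_def finite_set_unif_tuples)
  have fin_bernoulli: "finite (set_pmf (bernoulli_pmf \<alpha>))"
    by (rule finite_subset[of _ UNIV]) auto
  have "measure_pmf.expectation (full_edge M N) f
      = measure_pmf.expectation (unif_tuples {1..N} (mK M)) Q"
    unfolding full_edge_def Q_def using N
    by (subst pmf_expectation_pair) (auto intro!: finite_set_unif_tuples finite_set_edge_pot)
  also have "\<dots> \<le> \<alpha> * measure_pmf.expectation (U True) Q + (1 - \<alpha>) * measure_pmf.expectation (U False) Q"
    unfolding \<alpha>_def U_def if_True if_False
    by (rule expectation_unif_tuples_le_split[OF N \<open>finite T\<close> c g]) (use mix in \<open>auto simp: Q_def\<close>)
  also have "\<dots> = measure_pmf.expectation (bernoulli_pmf \<alpha>)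
      (\<lambda>b. measure_pmf.expectation (U b) Q)"
    using N by (simp add: \<alpha>_def mult.commute)
  also have "\<dots> = measure_pmf.expectation (split_edge M N N1) f"
    unfolding split_edge_def \<alpha>_def[symmetric] U_def[symmetric] Q_def
    by (simp add: pmf_expectation_pair pmf_expectation_bind finU fin_bernoulli
        finite_set_edge_pot)
  finally show ?thesis .
qed

definition is_low :: "model \<Rightarrow> hedge \<Rightarrow> (nat \<Rightarrow> nat) \<Rightarrow> real" where
  "is_low M e x = of_bool (snd e (map x (fst e)) = pot_low M)"

definition joint_low :: "model \<Rightarrow> (nat \<Rightarrow> nat \<Rightarrow> nat) \<Rightarrow> nat \<Rightarrow> hedge \<Rightarrow> real" where
  "joint_low M xs n e = (\<Prod>j<n. is_low M e (xs j))"

lemma if_zero_one_eq_zero_iff [simp]: "(if c then 0 else 1 :: ereal) = 0 \<longleftrightarrow> c"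
  by simp

lemma prod_of_bool: "finite A \<Longrightarrow> (\<Prod>j\<in>A. (of_bool (P j) :: real)) = of_bool (\<forall>j\<in>A. P j)"
  by (induction A rule: finite_induct) auto

lemma expectation_joint_low_IndSet:
  assumes "i \<in> tuples {1..N} 2"
  shows "measure_pmf.expectation (edge_pot IndSet) (\<lambda>\<phi>. joint_low IndSet xs n (i, \<phi>))
       = (\<Sum>t\<in>{()}. 1 * prod_list (map (\<lambda>v. \<Prod>j<n. of_bool (xs j v = 1)) i))"
  using assms
  by (elim tuples_2_obtain) (auto simp: joint_low_def is_low_def prod.distrib[symmetric]
      intro!: prod.cong)

text \<open>For the models whose edge is low exactly on equal spins, joint lowness means that the two
  endpoints have the same column \<open>(x\<^sub>j(v))\<^sub>j\<^sub><\<^sub>n\<close>; summing over the possible columns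
  gives the product form.\<close>

lemma expectation_joint_low_equality:
  fixes xs :: "nat \<Rightarrow> nat \<Rightarrow> nat" and n :: nat
  assumes "i \<in> tuples {1..N} 2"
    and pot: "edge_pot M = return_pmf \<phi>" "\<And>y. \<phi> y = pot_low M \<longleftrightarrow> y ! 0 = y ! 1"
  defines "col \<equiv> \<lambda>v j. if j < n then xs j v else 0"
  shows "measure_pmf.expectation (edge_pot M) (\<lambda>\<phi>. joint_low M xs n (i, \<phi>))
       = (\<Sum>s\<in>col ` {1..N}. 1 * prod_list (map (\<lambda>v. of_bool (col v = s)) i))"
proof -
  obtain a b where i: "i = [a, b]" "a \<in> {1..N}" "b \<in> {1..N}"
    using assms(1) by (elim tuples_2_obtain)
  have "(col a = col b) = (\<forall>j<n. xs j a = xs j b)"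
    unfolding col_def fun_eq_iff by (metis (full_types))
  then have "joint_low M xs n (i, \<phi>) = of_bool (col a = col b)"
    by (simp add: joint_low_def is_low_def pot i prod_of_bool) blast
  also have "\<dots> = (\<Sum>s\<in>col ` {1..N}. if s = col a then of_bool (col b = s) else 0)"
    using i by (subst sum.delta) auto
  also have "\<dots> = (\<Sum>s\<in>col ` {1..N}. of_bool (col a = s) * of_bool (col b = s))"
    by (intro sum.cong) auto
  finally show ?thesis by (simp add: pot i)
qed

definition agree_count :: "(nat \<Rightarrow> nat \<Rightarrow> nat) \<Rightarrow> nat \<Rightarrow> nat \<Rightarrow> real" where
  "agree_count xs n v = of_bool (\<forall>j<n. xs j v = 0) + of_bool (\<forall>j<n. xs j v = 1)"

lemma sum_bin_lists_prod_indicator: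
  "(\<Sum>a\<in>bin_lists (length i). \<Prod>j<n. (of_bool (map (xs j) i = a) :: real))
     = prod_list (map (agree_count xs n) i)"
proof (induction i)
  case Nil
  have "bin_lists 0 = {[]}" unfolding bin_lists_def by auto
  then show ?case by simp
next
  case (Cons v i)
  let ?T = "tuples {0, 1} (length i)"
  have inj: "inj_on (\<lambda>(x, xs). x # xs) ({0, 1} \<times> ?T)" by (auto simp: inj_on_def)
  have "(\<Sum>a\<in>bin_lists (length (v # i)). \<Prod>j<n. (of_bool (map (xs j) (v # i) = a) :: real))
      = (\<Sum>(b, as)\<in>{0, 1} \<times> ?T.
           (\<Prod>j<n. (of_bool (xs j v = b) :: real)) * (\<Prod>j<n. of_bool (map (xs j) i = as)))"
    unfolding bin_lists_eq_tuples length_Cons tuples_Suc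
    by (subst sum.reindex[OF inj]) (auto simp: prod.distrib[symmetric] intro!: sum.cong prod.cong)
  also have "\<dots> = (\<Sum>b\<in>{0, 1}. (\<Prod>j<n. (of_bool (xs j v = b) :: real))) *
        (\<Sum>as\<in>?T. \<Prod>j<n. (of_bool (map (xs j) i = as) :: real))"
    by (simp add: sum.cartesian_product[symmetric] sum_distrib_left[symmetric] distrib_right)
  also have "(\<Sum>b\<in>{0, 1}. (\<Prod>j<n. (of_bool (xs j v = b) :: real))) = agree_count xs n v"
    by (simp add: agree_count_def prod_of_bool) blast
  finally show ?case using Cons by (simp add: bin_lists_eq_tuples)
qed

lemma expectation_joint_low_KSAT:
  assumes "i \<in> tuples {1..N} K"
  shows "measure_pmf.expectation (edge_pot (KSAT K)) (\<lambda>\<phi>. joint_low (KSAT K) xs n (i, \<phi>))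
       = (\<Sum>t\<in>{()}. 1 / 2 ^ K * prod_list (map (agree_count xs n) i))"
proof -
  have "length i = K" using assms by (simp add: tuples_def)
  then show ?thesis
    using sum_bin_lists_prod_indicator[where i=i and n=n and xs=xs]
    by (simp add: integral_pmf_of_set finite_bin_lists bin_lists_nonempty card_bin_lists
        joint_low_def is_low_def)
qed

text \<open>A NAE clause is low at \<open>x\<close> iff \<open>x\<close> equals the clause pattern or its complement;
  choosing for each configuration which of the two it matches (complementing the
  configurations outside \<open>S\<close>) turns the NAE case into a sum of K-SAT cases.\<close>

definition flip_outside :: "nat set \<Rightarrow> (nat \<Rightarrow> nat \<Rightarrow> nat) \<Rightarrow> nat \<Rightarrow> nat \<Rightarrow> nat" where
  "flip_outside S xs j v = (if j \<in> S then xs j v else 1 - xs j v)"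

lemma complement_neq_self:
  assumes "i \<noteq> []"
  shows "map (\<lambda>b. 1 - b) i \<noteq> (i :: nat list)"
proof -
  have "1 - b \<noteq> b" for b :: nat by arith
  then show ?thesis using assms by (cases i) auto
qed

lemma eq_complement_iff:
  assumes "a \<in> bin_lists K" "\<forall>v\<in>set i. x v \<le> 1"
  shows "map x i = map (\<lambda>b. 1 - b) a \<longleftrightarrow> map (\<lambda>v. 1 - x v) i = a"
proof
  assume h: "map x i = map (\<lambda>b. 1 - b) a"
  have "map (\<lambda>v. 1 - x v) i = map (\<lambda>b. 1 - b) (map x i)" by simp
  also have "\<dots> = map (\<lambda>b. 1 - (1 - b)) a" by (simp add: h)
  also have "\<dots> = a" using assms(1) unfolding bin_lists_def by (auto intro!: map_idI)
  finally show "map (\<lambda>v. 1 - x v) i = a" .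
next
  assume h: "map (\<lambda>v. 1 - x v) i = a"
  have "map x i = map (\<lambda>v. 1 - (1 - x v)) i" using assms(2) by (auto intro!: map_cong)
  also have "\<dots> = map (\<lambda>b. 1 - b) a" by (simp add: h[symmetric])
  finally show "map x i = map (\<lambda>b. 1 - b) a" .
qed

lemma prod_nae_indicator_eq_sum_flips:
  assumes a: "a \<in> bin_lists K" "K \<ge> 1"
    and xs: "\<And>j v. j < n \<Longrightarrow> v \<in> set i \<Longrightarrow> xs j v \<le> 1"
  shows "(\<Prod>j<n. (of_bool (map (xs j) i = a \<or> map (xs j) i = map (\<lambda>b. 1 - b) a) :: real))
       = (\<Sum>S\<in>Pow {..<n}. \<Prod>j<n. of_bool (map (flip_outside S xs j) i = a))"
proof -
  let ?eq = "\<lambda>j. (of_bool (map (xs j) i = a) :: real)"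
  let ?eqc = "\<lambda>j. (of_bool (map (xs j) i = map (\<lambda>b. 1 - b) a) :: real)"
  have "a \<noteq> []" using a by (auto simp: bin_lists_def)
  then have "(\<Prod>j<n. (of_bool (map (xs j) i = a \<or> map (xs j) i = map (\<lambda>b. 1 - b) a) :: real))
      = (\<Prod>j<n. ?eq j + ?eqc j)"
    using complement_neq_self[of a] by (intro prod.cong) auto
  also have "\<dots> = (\<Sum>S\<in>Pow {..<n}. (\<Prod>j\<in>S. ?eq j) * (\<Prod>j\<in>{..<n} - S. ?eqc j))"
    by (rule prod_add) simp
  also have "\<dots> = (\<Sum>S\<in>Pow {..<n}. \<Prod>j<n. of_bool (map (flip_outside S xs j) i = a))"
  proof (intro sum.cong refl)
    fix S assume S: "S \<in> Pow {..<n}"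
    have "?eqc j = of_bool (map (flip_outside S xs j) i = a)" if "j \<in> {..<n} - S" for j
    proof -
      have "flip_outside S xs j = (\<lambda>v. 1 - xs j v)"
        using that by (simp add: fun_eq_iff flip_outside_def)
      then show ?thesis using that xs eq_complement_iff[OF a(1), of i "xs j"] by simp
    qed
    moreover have "?eq j = of_bool (map (flip_outside S xs j) i = a)" if "j \<in> S" for j
    proof -
      have "flip_outside S xs j = xs j" using that by (simp add: fun_eq_iff flip_outside_def)
      then show ?thesis by simp
    qed
    ultimately show "(\<Prod>j\<in>S. ?eq j) * (\<Prod>j\<in>{..<n} - S. ?eqc j)
        = (\<Prod>j<n. of_bool (map (flip_outside S xs j) i = a))"
      using S by (simp add: prod.subset_diff[of S "{..<n}"] mult.commute)
  qed
  finally show ?thesis .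
qed

lemma expectation_joint_low_NAEKSAT:
  assumes i: "i \<in> tuples {1..N} K" and "K \<ge> 1"
    and xs: "\<And>j v. j < n \<Longrightarrow> v \<in> set i \<Longrightarrow> xs j v \<le> 1"
  shows "measure_pmf.expectation (edge_pot (NAEKSAT K)) (\<lambda>\<phi>. joint_low (NAEKSAT K) xs n (i, \<phi>))
     = (\<Sum>S\<in>Pow {..<n}. 1 / 2 ^ K * prod_list (map (agree_count (flip_outside S xs) n) i))"
proof -
  have len: "length i = K" using i by (simp add: tuples_def)
  have "measure_pmf.expectation (edge_pot (NAEKSAT K)) (\<lambda>\<phi>. joint_low (NAEKSAT K) xs n (i, \<phi>))
      = (\<Sum>a\<in>bin_lists K. \<Prod>j<n. (of_bool (map (xs j) i = a \<or>
           map (xs j) i = map (\<lambda>b. 1 - b) a) :: real)) / 2 ^ K"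
    by (simp add: integral_pmf_of_set finite_bin_lists bin_lists_nonempty card_bin_lists
        joint_low_def is_low_def)
  also have "\<dots> = (\<Sum>a\<in>bin_lists K. \<Sum>S\<in>Pow {..<n}.
      \<Prod>j<n. (of_bool (map (flip_outside S xs j) i = a) :: real)) / 2 ^ K"
    using prod_nae_indicator_eq_sum_flips[OF _ \<open>K \<ge> 1\<close> xs] by simp
  also have "\<dots> = (\<Sum>S\<in>Pow {..<n}. prod_list (map (agree_count (flip_outside S xs) n) i)) / 2 ^ K"
    by (subst sum.swap) (simp add: sum_bin_lists_prod_indicator[where i=i, unfolded len])
  finally show ?thesis by (simp add: sum_divide_distrib)
qed

lemma expectation_joint_low_full_le_split:
  assumes N: "1 \<le> N1" "1 \<le> N2" "N1 + N2 = N" and "valid_model M"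
    and xs: "\<And>j. j < n \<Longrightarrow> xs j \<in> PiE {1..N} (\<lambda>_. {0..<mq M})"
  shows "measure_pmf.expectation (full_edge M N) (joint_low M xs n)
       \<le> measure_pmf.expectation (split_edge M N N1) (joint_low M xs n)"
proof -
  have equality_case: ?thesis
    if "mK M = 2" "edge_pot M = return_pmf \<phi>" "\<And>y. \<phi> y = pot_low M \<longleftrightarrow> y ! 0 = y ! 1" for \<phi>
  proof -
    let ?col = "\<lambda>v j. if j < n then xs j v else 0"
    show ?thesis
      by (rule expectation_full_edge_le_split_edge[OF N, where T="?col ` {1..N}" and c="\<lambda>_. 1"
            and g="\<lambda>s v. of_bool (?col v = s)"])
         (use that expectation_joint_low_equality[OF _ that(2,3)] in auto)
  qed
  show ?thesis
  proof (cases M)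
    case IndSet
    then show ?thesis
      by (intro expectation_full_edge_le_split_edge[OF N, of "{()}" "\<lambda>_. 1"
          "\<lambda>_ v. \<Prod>j<n. of_bool (xs j v = 1)"])
         (auto intro: prod_nonneg simp del: edge_pot.simps simp: expectation_joint_low_IndSet)
  next
    case MaxCut
    then show ?thesis by (intro equality_case) (auto split: if_splits)
  next
    case (Coloring q)
    then show ?thesis by (intro equality_case) (auto split: if_splits)
  next
    case (Ising \<beta> B)
    then show ?thesis using \<open>valid_model M\<close> by (intro equality_case) (auto split: if_splits)
  next
    case (KSAT K)
    have mix: "measure_pmf.expectation (edge_pot M) (\<lambda>\<phi>. joint_low M xs n (i, \<phi>))
        = (\<Sum>t\<in>{()}. 1 / 2 ^ K * prod_list (map (agree_count xs n) i))"
      if "i \<in> tuples {1..N} (mK M)" for i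
      using that unfolding KSAT mK.simps by (rule expectation_joint_low_KSAT)
    show ?thesis
      by (rule expectation_full_edge_le_split_edge[OF N _ _ _ mix]) (auto simp: agree_count_def)
  next
    case (NAEKSAT K)
    have binary: "xs j v \<le> 1" if "j < n" "v \<in> {1..N}" for j v
      using xs[OF that(1)] that(2) NAEKSAT by (auto simp: PiE_def Pi_def)
    have mix: "measure_pmf.expectation (edge_pot M) (\<lambda>\<phi>. joint_low M xs n (i, \<phi>))
        = (\<Sum>S\<in>Pow {..<n}. 1 / 2 ^ K * prod_list (map (agree_count (flip_outside S xs) n) i))"
      if "i \<in> tuples {1..N} (mK M)" for i
      unfolding NAEKSAT
      by (rule expectation_joint_low_NAEKSAT)
         (use that NAEKSAT \<open>valid_model M\<close> binary in \<open>auto simp: tuples_def\<close>)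
    show ?thesis
      by (rule expectation_full_edge_le_split_edge[OF N _ _ _ mix]) (auto simp: agree_count_def)
  qed
qed

lemma moments_full_le_split:
  fixes p :: "(nat \<Rightarrow> nat) \<Rightarrow> real"
  assumes N: "1 \<le> N1" "1 \<le> N2" "N1 + N2 = N" and "valid_model M" and p: "\<And>x. 0 \<le> p x"
  defines "X \<equiv> PiE {1..N} (\<lambda>_. {0..<mq M})"
  shows "measure_pmf.expectation (full_edge M N) (\<lambda>e. (\<Sum>x\<in>X. p x * is_low M e x) ^ n)
      \<le> measure_pmf.expectation (split_edge M N N1) (\<lambda>e. (\<Sum>x\<in>X. p x * is_low M e x) ^ n)"
proof -
  have fin: "finite X" "finite (PiE {..<n} (\<lambda>_. X))" by (simp_all add: X_def finite_PiE)
  have "(\<Sum>x\<in>X. p x * is_low M e x) ^ n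
      = (\<Sum>xs\<in>PiE {..<n} (\<lambda>_. X). (\<Prod>j<n. p (xs j)) * joint_low M xs n e)" for e
  proof -
    have "(\<Sum>x\<in>X. p x * is_low M e x) ^ n = (\<Prod>j<n. \<Sum>x\<in>X. p x * is_low M e x)" by simp
    also have "\<dots> = (\<Sum>xs\<in>PiE {..<n} (\<lambda>_. X). \<Prod>j<n. p (xs j) * is_low M e (xs j))"
      by (rule prod_sum_PiE) (auto simp: fin)
    finally show ?thesis by (simp add: prod.distrib joint_low_def)
  qed
  then show ?thesis
    using N
    by (simp add: pmf_expectation_sum fin finite_set_full_edge finite_set_split_edge)
       (intro sum_mono mult_left_mono prod_nonneg p
         expectation_joint_low_full_le_split[OF N \<open>valid_model M\<close>]; auto simp: X_def)
qed

lemma lam_pow_nonneg: "0 \<le> lam_pow lam h"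
  by (simp add: lam_pow_def)

lemma lam_pow_add:
  assumes "lam > 0" "a \<noteq> \<infinity>" "b \<noteq> \<infinity>"
  shows "lam_pow lam (a + b) = lam_pow lam a * lam_pow lam b"
  using assms by (cases a; cases b) (auto simp: lam_pow_def powr_add)

lemma sum_list_ereal_not_MInfty: "(\<And>a. a \<in> set xs \<Longrightarrow> a \<noteq> -\<infinity>) \<Longrightarrow> sum_list xs \<noteq> (-\<infinity> :: ereal)"
  by (induction xs) auto

lemma sum_ereal_not_MInfty: "(\<And>a. a \<in> A \<Longrightarrow> f a \<noteq> -\<infinity>) \<Longrightarrow> sum f A \<noteq> (-\<infinity> :: ereal)"
  by (induction A rule: infinite_finite_induct) auto

lemma hamiltonian_Cons:
  "hamiltonian M N (e # G) x = snd e (map x (fst e)) + hamiltonian M N G x"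
  by (simp add: hamiltonian_def add_ac)

lemma partition_fn_move_to_front:
  "partition_fn M lam N (xs @ e # ys) = partition_fn M lam N (e # xs @ ys)"
  by (simp add: partition_fn_def hamiltonian_def add_ac)

lemma hamiltonian_not_PInfty:
  assumes "set G \<subseteq> good_edges M N"
  shows "hamiltonian M N G x \<noteq> \<infinity>"
proof -
  have "node_pot M s \<noteq> \<infinity>" for s by (cases M) auto
  then have "(\<Sum>i\<in>{1..N}. node_pot M (x i)) \<noteq> \<infinity>" by (simp add: sum_Pinfty)
  moreover have "sum_list (map (\<lambda>e. snd e (map x (fst e))) G) \<noteq> \<infinity>"
    using assms by (induction G) (auto simp: good_edges_def dest: edge_pot_not_PInfty)
  ultimately show ?thesis by (simp add: hamiltonian_def)
qed

lemma edge_pot_zeros_not_MInfty: "\<phi> \<in> set_pmf (edge_pot M) \<Longrightarrow> \<phi> (replicate (mK M) 0) \<noteq> -\<infinity>"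
  by (cases M) (auto simp: finite_bin_lists bin_lists_nonempty numeral_2_eq_2)

text \<open>The all-zero configuration has finite energy (for independent sets: the empty set is
  independent).\<close>

lemma partition_fn_pos:
  assumes "lam > 0" "0 < mq M" "set G \<subseteq> good_edges M N"
  shows "0 < partition_fn M lam N G"
proof -
  define z :: "nat \<Rightarrow> nat" where "z v = (if v \<in> {1..N} then 0 else undefined)" for v
  have z: "z \<in> PiE {1..N} (\<lambda>_. {0..<mq M})" using assms(2) by (auto simp: z_def)
  have "map z (fst e) = replicate (mK M) 0" if "e \<in> set G" for e
  proof -
    have "e \<in> good_edges M N" using that assms(3) by blast
    then have "length (fst e) = mK M" "set (fst e) \<subseteq> {1..N}"
      by (auto simp: good_edges_def tuples_def)
    then show ?thesis by (intro replicate_eqI) (auto simp: z_def)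
  qed
  then have "snd e (map z (fst e)) \<noteq> -\<infinity>" if "e \<in> set G" for e
    using that assms(3) edge_pot_zeros_not_MInfty by (fastforce simp: good_edges_def)
  then have "sum_list (map (\<lambda>e. snd e (map z (fst e))) G) \<noteq> -\<infinity>"
    by (intro sum_list_ereal_not_MInfty) auto
  moreover have "(\<Sum>i\<in>{1..N}. node_pot M (z i)) \<noteq> -\<infinity>"
    by (intro sum_ereal_not_MInfty) (cases M; auto)
  ultimately have "hamiltonian M N G z \<noteq> -\<infinity>"
    by (simp add: hamiltonian_def)
  then show ?thesis
    unfolding partition_fn_def using z assms(1)
    by (intro sum_pos2[OF finite_PiE z]) (auto simp: lam_pow_def lam_pow_nonneg)
qed

lemma partition_fn_no_spins:
  assumes "mq M = 0" "1 \<le> N"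
  shows "partition_fn M lam N G = 0"
proof -
  have "PiE {1..N} (\<lambda>_. {0..<mq M}) = {}"
    using assms by (subst PiE_eq_empty_iff) auto
  then show ?thesis by (simp add: partition_fn_def)
qed

lemma partition_fn_Cons:
  assumes "valid_model M" "lam > 0" "e \<in> good_edges M N" "set G \<subseteq> good_edges M N"
  defines "\<kappa> \<equiv> lam_pow lam (pot_high M)" and "\<kappa>\<^sub>0 \<equiv> lam_pow lam (pot_low M)"
  shows "partition_fn M lam N (e # G) = \<kappa> * partition_fn M lam N G
    - (\<kappa> - \<kappa>\<^sub>0) * (\<Sum>x\<in>PiE {1..N} (\<lambda>_. {0..<mq M}).
         lam_pow lam (hamiltonian M N G x) * is_low M e x)"
proof -
  have pot: "snd e \<in> set_pmf (edge_pot M)" using assms(3) by (auto simp: good_edges_def)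
  define w where "w x = lam_pow lam (hamiltonian M N G x)" for x
  have low_high: "lam_pow lam (snd e y) = \<kappa> - (\<kappa> - \<kappa>\<^sub>0) * of_bool (snd e y = pot_low M)" for y
    using edge_pot_values[OF pot, of y] pot_low_neq_high[OF assms(1)] by (auto simp: \<kappa>_def \<kappa>\<^sub>0_def)
  have "lam_pow lam (hamiltonian M N (e # G) x) = lam_pow lam (snd e (map x (fst e))) * w x" for x
    unfolding hamiltonian_Cons w_def
    using assms(2) edge_pot_not_PInfty[OF pot] hamiltonian_not_PInfty[OF assms(4)]
    by (intro lam_pow_add) auto
  then have "lam_pow lam (hamiltonian M N (e # G) x) = \<kappa> * w x - (\<kappa> - \<kappa>\<^sub>0) * (w x * is_low M e x)"
    for x
    by (simp add: low_high is_low_def algebra_simps)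
  then show ?thesis
    by (simp add: partition_fn_def w_def sum_subtractf sum_distrib_left)
qed

section \<open>Comparing logarithmic expectations through moments\<close>

lemma sum_ln_one_minus_le_of_moments:
  fixes u pF pS :: "'a \<Rightarrow> real"
  assumes "finite A" and u: "\<And>a. a \<in> A \<Longrightarrow> 0 \<le> u a \<and> u a < 1"
    and mom: "\<And>n. (\<Sum>a\<in>A. pF a * u a ^ n) \<le> (\<Sum>a\<in>A. pS a * u a ^ n)"
  shows "(\<Sum>a\<in>A. pS a * ln (1 - u a)) \<le> (\<Sum>a\<in>A. pF a * ln (1 - u a))"
proof -
  have "(\<lambda>n. - (u a ^ n) / of_nat n) sums ln (1 - u a)" if "a \<in> A" for a
    using ln_series'[of "- u a"] u[OF that] by simp
  then have series: "(\<lambda>n. \<Sum>a\<in>A. p a * (- (u a ^ n) / of_nat n)) sums (\<Sum>a\<in>A. p a * ln (1 - u a))"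
    for p
    by (intro sums_sum sums_mult)
  show ?thesis
  proof (rule sums_le[OF _ series series])
    fix n
    have "(\<Sum>a\<in>A. pS a * (- (u a ^ n) / of_nat n)) = - (1 / of_nat n) * (\<Sum>a\<in>A. pS a * u a ^ n)"
      and "(\<Sum>a\<in>A. pF a * (- (u a ^ n) / of_nat n)) = - (1 / of_nat n) * (\<Sum>a\<in>A. pF a * u a ^ n)"
      by (simp_all add: sum_distrib_left)
    then show "(\<Sum>a\<in>A. pS a * (- (u a ^ n) / of_nat n)) \<le> (\<Sum>a\<in>A. pF a * (- (u a ^ n) / of_nat n))"
      using mom[of n] by (simp add: divide_right_mono)
  qed
qed

lemma expectation_ln_le_of_moments:
  fixes s :: "'a \<Rightarrow> real"
  assumes fin: "finite (set_pmf F)" "finite (set_pmf S)" and "0 < a" "0 \<le> b"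
    and s: "\<And>e. e \<in> set_pmf F \<union> set_pmf S \<Longrightarrow> 0 \<le> s e \<and> b * s e < a"
    and mom: "\<And>n. measure_pmf.expectation F (\<lambda>e. s e ^ n) \<le> measure_pmf.expectation S (\<lambda>e. s e ^ n)"
  shows "measure_pmf.expectation S (\<lambda>e. ln (a - b * s e))
       \<le> measure_pmf.expectation F (\<lambda>e. ln (a - b * s e))"
proof -
  let ?A = "set_pmf F \<union> set_pmf S"
  define u where "u e = b / a * s e" for e
  have finA: "finite ?A" using fin by simp
  note E_sum = pmf_expectation_eq_sum[OF finA Un_upper1] pmf_expectation_eq_sum[OF finA Un_upper2]
  have u: "0 \<le> u e \<and> u e < 1" if "e \<in> ?A" for e
    using s[OF that] \<open>0 < a\<close> \<open>0 \<le> b\<close> by (auto simp: u_def field_simps)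
  have "ln (a - b * s e) = ln a + ln (1 - u e)" if "e \<in> ?A" for e
  proof -
    have "a - b * s e = a * (1 - u e)" using \<open>0 < a\<close> by (simp add: u_def field_simps)
    then show ?thesis using u[OF that] \<open>0 < a\<close> by (simp add: ln_mult)
  qed
  then have E_ln: "measure_pmf.expectation P (\<lambda>e. ln (a - b * s e))
      = ln a + measure_pmf.expectation P (\<lambda>e. ln (1 - u e))" if "P = F \<or> P = S" for P
    using that fin
    by (subst pmf_expectation_cong[of P _ "\<lambda>e. ln a + ln (1 - u e)"])
       (auto simp: integrable_measure_pmf_finite)
  have "u e ^ n = (b / a) ^ n * s e ^ n" for e n by (metis u_def power_mult_distrib)
  then have mom_u: "(\<Sum>e\<in>?A. pmf F e * u e ^ n) \<le> (\<Sum>e\<in>?A. pmf S e * u e ^ n)" for n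
    using mult_left_mono[OF mom[of n], of "(b / a) ^ n"] \<open>0 < a\<close> \<open>0 \<le> b\<close>
    by (simp add: E_sum sum_distrib_left mult.left_commute)
  show ?thesis
    unfolding E_ln[of S, simplified] E_ln[of F, simplified]
    using sum_ln_one_minus_le_of_moments[OF finA u mom_u] by (simp add: E_sum)
qed

lemma expectation_ln_partition_fn_split_le_full:
  assumes N: "1 \<le> N1" "1 \<le> N2" "N1 + N2 = N" and "valid_model M" and "lam > 1"
    and G: "set G \<subseteq> good_edges M N"
  shows "measure_pmf.expectation (split_edge M N N1) (\<lambda>e. ln (partition_fn M lam N (e # G)))
       \<le> measure_pmf.expectation (full_edge M N) (\<lambda>e. ln (partition_fn M lam N (e # G)))"
proof (cases "mq M = 0")
  case True
  then show ?thesis using N by (simp add: partition_fn_no_spins)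
next
  case False
  define w where "w x = lam_pow lam (hamiltonian M N G x)" for x
  define \<sigma> where "\<sigma> e = (\<Sum>x\<in>PiE {1..N} (\<lambda>_. {0..<mq M}). w x * is_low M e x)" for e
  define \<kappa> where "\<kappa> = lam_pow lam (pot_high M)"
  define \<kappa>\<^sub>0 where "\<kappa>\<^sub>0 = lam_pow lam (pot_low M)"
  let ?Z = "\<lambda>G. partition_fn M lam N G"
  have \<kappa>: "\<kappa>\<^sub>0 < \<kappa>" "0 \<le> \<kappa>\<^sub>0"
    using lam_pow_pot_low_less_high[OF assms(4,5)] by (auto simp: \<kappa>_def \<kappa>\<^sub>0_def lam_pow_nonneg)
  have fin: "finite (set_pmf (full_edge M N))" "finite (set_pmf (split_edge M N N1))"
    using N by (simp_all add: finite_set_full_edge finite_set_split_edge)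
  have good: "e \<in> good_edges M N" if "e \<in> set_pmf (full_edge M N) \<union> set_pmf (split_edge M N N1)" for e
    using that N set_full_edge[of N M] set_split_edge[OF N, of M] by auto
  have Z: "?Z (e # G) = \<kappa> * ?Z G - (\<kappa> - \<kappa>\<^sub>0) * \<sigma> e" if "e \<in> good_edges M N" for e
    using partition_fn_Cons[OF assms(4) _ that G] \<open>lam > 1\<close> by (simp add: \<kappa>_def \<kappa>\<^sub>0_def \<sigma>_def w_def)
  have pos: "0 < ?Z G'" if "set G' \<subseteq> good_edges M N" for G'
    using partition_fn_pos[OF _ _ that] \<open>lam > 1\<close> False by simp
  have "measure_pmf.expectation (split_edge M N N1) (\<lambda>e. ln (\<kappa> * ?Z G - (\<kappa> - \<kappa>\<^sub>0) * \<sigma> e))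
      \<le> measure_pmf.expectation (full_edge M N) (\<lambda>e. ln (\<kappa> * ?Z G - (\<kappa> - \<kappa>\<^sub>0) * \<sigma> e))"
  proof (rule expectation_ln_le_of_moments[OF fin])
    show "0 < \<kappa> * ?Z G" using \<kappa> pos[OF G] by simp
    show "0 \<le> \<kappa> - \<kappa>\<^sub>0" using \<kappa> by simp
    show "0 \<le> \<sigma> e \<and> (\<kappa> - \<kappa>\<^sub>0) * \<sigma> e < \<kappa> * ?Z G"
      if "e \<in> set_pmf (full_edge M N) \<union> set_pmf (split_edge M N N1)" for e
      using pos[of "e # G"] Z[OF good[OF that]] good[OF that] G
      by (auto simp: \<sigma>_def w_def is_low_def lam_pow_nonneg intro!: sum_nonneg)
    show "measure_pmf.expectation (full_edge M N) (\<lambda>e. \<sigma> e ^ n)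
        \<le> measure_pmf.expectation (split_edge M N N1) (\<lambda>e. \<sigma> e ^ n)" for n
      unfolding \<sigma>_def by (rule moments_full_le_split[OF N assms(4)]) (simp add: w_def lam_pow_nonneg)
  qed
  moreover have "measure_pmf.expectation P (\<lambda>e. ln (?Z (e # G)))
      = measure_pmf.expectation P (\<lambda>e. ln (\<kappa> * ?Z G - (\<kappa> - \<kappa>\<^sub>0) * \<sigma> e))"
    if "P = full_edge M N \<or> P = split_edge M N N1" for P
    using that fin good by (intro pmf_expectation_cong) (auto simp: Z)
  ultimately show ?thesis by simp
qed

lemma rand_graph_decompose:
  assumes "1 \<le> r" "r \<le> m"
  shows "rand_graph M N N1 m r = indep_list (replicate (r - 1) (full_edge M N) @
           full_edge M N # replicate (m - r) (split_edge M N N1))"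
    and "rand_graph M N N1 m (r - 1) = indep_list (replicate (r - 1) (full_edge M N) @
           split_edge M N N1 # replicate (m - r) (split_edge M N N1))"
proof -
  have "replicate r (full_edge M N) = replicate (r - 1) (full_edge M N) @ [full_edge M N]"
    using \<open>1 \<le> r\<close> by (cases r) (simp_all add: replicate_append_same)
  then show "rand_graph M N N1 m r = indep_list (replicate (r - 1) (full_edge M N) @
      full_edge M N # replicate (m - r) (split_edge M N N1))"
    by (simp add: rand_graph_def)
  show "rand_graph M N N1 m (r - 1) = indep_list (replicate (r - 1) (full_edge M N) @
      split_edge M N N1 # replicate (m - r) (split_edge M N N1))"
    using assms by (simp add: rand_graph_def Suc_diff_le)
qed

lemma expectation_ln_partition_fn_rand_graph_mono:
  assumes N: "1 \<le> N1" "1 \<le> N2" "N1 + N2 = N" and "valid_model M" and "lam > 1"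
    and "1 \<le> r" "r \<le> m"
  shows "measure_pmf.expectation (rand_graph M N N1 m (r - 1)) (\<lambda>G. ln (partition_fn M lam N G))
       \<le> measure_pmf.expectation (rand_graph M N N1 m r) (\<lambda>G. ln (partition_fn M lam N G))"
proof -
  define F where "F = full_edge M N"
  define S where "S = split_edge M N N1"
  define as where "as = replicate (r - 1) F"
  define bs where "bs = replicate (m - r) S"
  have fin: "finite (set_pmf F)" "finite (set_pmf S)"
    using N by (simp_all add: F_def S_def finite_set_full_edge finite_set_split_edge)
  have supp: "(\<Union>p\<in>set (as @ bs). set_pmf p) \<subseteq> good_edges M N"
    using set_full_edge[of N M] set_split_edge[OF N, of M] N by (auto simp: as_def bs_def F_def S_def)
  have "measure_pmf.expectation (indep_list (as @ S # bs)) (\<lambda>G. ln (partition_fn M lam N G))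
      \<le> measure_pmf.expectation (indep_list (as @ F # bs)) (\<lambda>G. ln (partition_fn M lam N G))"
  proof (rule expectation_indep_list_replace_le[OF _ fin])
    show "finite (set_pmf p)" if "p \<in> set (as @ bs)" for p
      using that fin by (auto simp: as_def bs_def)
    show "ln (partition_fn M lam N (xs @ e # ys)) = ln (partition_fn M lam N (e # xs @ ys))"
      for xs e ys by (simp add: partition_fn_move_to_front)
    show "measure_pmf.expectation S (\<lambda>e. ln (partition_fn M lam N (e # G)))
        \<le> measure_pmf.expectation F (\<lambda>e. ln (partition_fn M lam N (e # G)))"
      if "G \<in> set_pmf (indep_list (as @ bs))" for G
      unfolding F_def S_def using set_indep_list_subset[OF that] supp
      by (intro expectation_ln_partition_fn_split_le_full[OF N assms(4,5)]) blast
  qed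
  then show ?thesis
    using rand_graph_decompose[OF \<open>1 \<le> r\<close> \<open>r \<le> m\<close>, of M N N1]
    by (simp add: as_def bs_def F_def S_def)
qed

theorem proposition3:
  fixes c lam :: real and M :: model and N N1 N2 r :: nat
  assumes "c > 0" and "lam > 1" and "valid_model M"
    and "1 \<le> N1" and "N1 \<le> N - 1" and "1 \<le> N2" and "N2 \<le> N - 1" and "N1 + N2 = N"
    and "1 \<le> r" and "r \<le> nat \<lfloor>c * real N\<rfloor>"
  shows "measure_pmf.expectation (rand_graph M N N1 (nat \<lfloor>c * real N\<rfloor>) r)
           (\<lambda>G. ln (partition_fn M lam N G))
       \<ge> measure_pmf.expectation (rand_graph M N N1 (nat \<lfloor>c * real N\<rfloor>) (r - 1))
           (\<lambda>G. ln (partition_fn M lam N G))"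
  using expectation_ln_partition_fn_rand_graph_mono[of N1 N2 N M lam r "nat \<lfloor>c * real N\<rfloor>"] assms
  by simp

end
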